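(* Let $\mathcal{H}$ be a complex linear space with a non-degenerate indefinite inner product $[\cdot,\cdot]$, and let $\mathcal{H}=\mathcal{L}_+[\dot+]\mathcal{L}_-$ be a fundamental decomposition with associated inner product $\langle\cdot,\cdot\rangle_{\mathcal{L}}$ and norm $\|\cdot\|_{\mathcal{L}}$. Let $\{U(t):t\in\mathbb{R}\}$ be a one-parameter group of bijective linear operators on $\mathcal{H}$ ($U(0)=I$, $U(t+s)=U(t)U(s)$) which are unitary with respect to $[\cdot,\cdot]$, i.e. $[U(t)f,U(t)g]=[f,g]$ for all $f,g\in\mathcal{H}$, $t\in\mathbb{R}$. For $t\in\mathbb{R}$ let $\|\cdot\|_t$ be the norm associated with the fundamental decomposition $\mathcal{H}=\mathcal{L}^t_+[\dot+]\mathcal{L}^t_-$, where $\mathcal{L}^t_\pm=U(t)\mathcal{L}_\pm$. Then for every $t\neq0$ the following are equivalent: (i) $U(t)$ and $U(t)^{-1}$ are bounded operators in the pre-Hilbert space $(\mathcal{H},\langle\cdot,\cdot\rangle_{\mathcal{L}})$; (ii) the norms $\|\cdot\|_{\mathcal{L}}$ and $\|\cdot\|_t$ are equivalent on $\mathcal{H}$.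
   Context: An indefinite inner product is a Hermitian sesquilinear form $[\cdot,\cdot]$ (linear in the second argument) with vectors of both positive and negative square; non-degenerate means $[f,g]=0\ \forall g$ implies $f=0$. A subspace is positive (negative) if each nonzero vector in it has $[f,f]>0$ ($<0$). A fundamental decomposition $\mathcal{H}=\mathcal{L}_+[\dot+]\mathcal{L}_-$ is a direct sum of a positive subspace $\mathcal{L}_+$ and a negative subspace $\mathcal{L}_-$ that are $[\cdot,\cdot]$-orthogonal; its associated inner product is $\langle f,g\rangle_{\mathcal{L}}=[f_+,g_+]-[f_-,g_-]$ for $f=f_++f_-$, $g=g_++g_-$, $f_\pm,g_\pm\in\mathcal{L}_\pm$, with norm $\|f\|_{\mathcal{L}}=\langle f,f\rangle_{\mathcal{L}}^{1/2}$. Since $U(t)$ is bijective and preserves $[\cdot,\cdot]$, $\mathcal{H}=U(t)\mathcal{L}_+[\dot+]U(t)\mathcal{L}_-$ is again a fundamental decomposition; $\|\cdot\|_t$ is its associated norm. *)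

theory Defs
  imports Complex_Main
begin

text \<open>The complex linear space H is a type 'a with addition (ab_group_add) and a complex
scalar multiplication sc, assumed to satisfy the vector-space axioms (vector_space sc).\<close>

definition hermitian_sesq :: "(complex \<Rightarrow> 'a::ab_group_add \<Rightarrow> 'a) \<Rightarrow> ('a \<Rightarrow> 'a \<Rightarrow> complex) \<Rightarrow> bool" where
  "hermitian_sesq sc ip \<longleftrightarrow>
     (\<forall>f g. ip f g = cnj (ip g f)) \<and>
     (\<forall>f g h. ip f (g + h) = ip f g + ip f h) \<and>
     (\<forall>f g c. ip f (sc c g) = c * ip f g)"

definition nondegenerate :: "('a::zero \<Rightarrow> 'a \<Rightarrow> complex) \<Rightarrow> bool" where
  "nondegenerate ip \<longleftrightarrow> (\<forall>f. (\<forall>g. ip f g = 0) \<longrightarrow> f = 0)"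

text \<open>Indefinite: there are vectors of positive and of negative square
(ip f f is real by hermiticity, so we compare its real part).\<close>
definition indefinite :: "('a \<Rightarrow> 'a \<Rightarrow> complex) \<Rightarrow> bool" where
  "indefinite ip \<longleftrightarrow> (\<exists>f. Re (ip f f) > 0) \<and> (\<exists>g. Re (ip g g) < 0)"

definition positive_subspace :: "(complex \<Rightarrow> 'a::ab_group_add \<Rightarrow> 'a) \<Rightarrow> ('a \<Rightarrow> 'a \<Rightarrow> complex) \<Rightarrow> 'a set \<Rightarrow> bool" where
  "positive_subspace sc ip L \<longleftrightarrow> module.subspace sc L \<and> (\<forall>f\<in>L. f \<noteq> 0 \<longrightarrow> Re (ip f f) > 0)"

definition negative_subspace :: "(complex \<Rightarrow> 'a::ab_group_add \<Rightarrow> 'a) \<Rightarrow> ('a \<Rightarrow> 'a \<Rightarrow> complex) \<Rightarrow> 'a set \<Rightarrow> bool" where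
  "negative_subspace sc ip L \<longleftrightarrow> module.subspace sc L \<and> (\<forall>f\<in>L. f \<noteq> 0 \<longrightarrow> Re (ip f f) < 0)"

definition fundamental_decomposition ::
  "(complex \<Rightarrow> 'a::ab_group_add \<Rightarrow> 'a) \<Rightarrow> ('a \<Rightarrow> 'a \<Rightarrow> complex) \<Rightarrow> 'a set \<Rightarrow> 'a set \<Rightarrow> bool" where
  "fundamental_decomposition sc ip Lp Lm \<longleftrightarrow>
     positive_subspace sc ip Lp \<and> negative_subspace sc ip Lm \<and>
     (\<forall>f\<in>Lp. \<forall>g\<in>Lm. ip f g = 0) \<and>
     Lp \<inter> Lm = {0} \<and>
     (\<forall>f. \<exists>p\<in>Lp. \<exists>m\<in>Lm. f = p + m)"

definition comp_plus :: "'a set \<Rightarrow> 'a set \<Rightarrow> 'a::ab_group_add \<Rightarrow> 'a" where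
  "comp_plus Lp Lm f = (THE p. p \<in> Lp \<and> (\<exists>m\<in>Lm. f = p + m))"

definition comp_minus :: "'a set \<Rightarrow> 'a set \<Rightarrow> 'a::ab_group_add \<Rightarrow> 'a" where
  "comp_minus Lp Lm f = (THE m. m \<in> Lm \<and> (\<exists>p\<in>Lp. f = p + m))"

definition fd_inner :: "('a \<Rightarrow> 'a \<Rightarrow> complex) \<Rightarrow> 'a set \<Rightarrow> 'a set \<Rightarrow> 'a::ab_group_add \<Rightarrow> 'a \<Rightarrow> complex" where
  "fd_inner ip Lp Lm f g =
     ip (comp_plus Lp Lm f) (comp_plus Lp Lm g) - ip (comp_minus Lp Lm f) (comp_minus Lp Lm g)"

definition fd_norm :: "('a \<Rightarrow> 'a \<Rightarrow> complex) \<Rightarrow> 'a set \<Rightarrow> 'a set \<Rightarrow> 'a::ab_group_add \<Rightarrow> real" where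
  "fd_norm ip Lp Lm f = sqrt (Re (fd_inner ip Lp Lm f f))"

definition bounded_op :: "('a \<Rightarrow> 'a \<Rightarrow> complex) \<Rightarrow> 'a set \<Rightarrow> 'a set \<Rightarrow> ('a::ab_group_add \<Rightarrow> 'a) \<Rightarrow> bool" where
  "bounded_op ip Lp Lm T \<longleftrightarrow> (\<exists>C. \<forall>f. fd_norm ip Lp Lm (T f) \<le> C * fd_norm ip Lp Lm f)"

definition equivalent_norms :: "('a \<Rightarrow> real) \<Rightarrow> ('a \<Rightarrow> real) \<Rightarrow> bool" where
  "equivalent_norms n1 n2 \<longleftrightarrow> (\<exists>a b. a > 0 \<and> b > 0 \<and> (\<forall>f. a * n1 f \<le> n2 f \<and> n2 f \<le> b * n1 f))"

end

theory Submission
  imports Defs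
begin

text \<open>Since U(t) is additive, bijective and preserves [.,.], it carries the decomposition
f = f+ + f- along L onto the decomposition of U(t) f along L^t, with the same squares. Hence
the norm of the transported decomposition is the pull-back ||f||_t = ||U(t)^-1 f||_L, and (ii)
says that U(t)^-1 is bounded above and below in ||.||_L, which is (i).\<close>

lemma fundamental_decomposition_unique:
  assumes "vector_space sc" and "fundamental_decomposition sc ip Lp Lm"
    and "p \<in> Lp" "p' \<in> Lp" "m \<in> Lm" "m' \<in> Lm" and sum_eq: "p' + m' = p + m"
  shows "p' = p \<and> m' = m"
proof -
  have "module sc"
    using assms(1) module_iff_vector_space by blast
  moreover have "module.subspace sc Lp" "module.subspace sc Lm" and "Lp \<inter> Lm = {0}"
    using assms(2) unfolding fundamental_decomposition_def positive_subspace_def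
      negative_subspace_def by auto
  ultimately have "p' - p \<in> Lp" "m - m' \<in> Lm"
    using module.subspace_diff assms(3-6) by blast+
  moreover have "p' - p = m - m'"
    using sum_eq by (simp add: algebra_simps)
  ultimately have "p' - p = 0"
    using \<open>Lp \<inter> Lm = {0}\<close> by (metis IntI singletonD)
  then show ?thesis
    using sum_eq by simp
qed

lemma comp_plus_minus_eq:
  assumes "p \<in> A" "m \<in> B"
    and unique: "\<And>p' m'. p' \<in> A \<Longrightarrow> m' \<in> B \<Longrightarrow> p' + m' = p + m \<Longrightarrow> p' = p \<and> m' = m"
  shows "comp_plus A B (p + m) = p" and "comp_minus A B (p + m) = m"
proof -
  show "comp_plus A B (p + m) = p"
    unfolding comp_plus_def
  proof (rule the_equality)
    fix p' assume "p' \<in> A \<and> (\<exists>m'\<in>B. p + m = p' + m')"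
    then show "p' = p"
      using unique by metis
  qed (use assms in blast)
  show "comp_minus A B (p + m) = m"
    unfolding comp_minus_def
  proof (rule the_equality)
    fix m' assume "m' \<in> B \<and> (\<exists>p'\<in>A. p + m = p' + m')"
    then show "m' = m"
      using unique by metis
  qed (use assms in blast)
qed

lemma fd_norm_eq:
  assumes "p \<in> A" "m \<in> B"
    and "\<And>p' m'. p' \<in> A \<Longrightarrow> m' \<in> B \<Longrightarrow> p' + m' = p + m \<Longrightarrow> p' = p \<and> m' = m"
  shows "fd_norm ip A B (p + m) = sqrt (Re (ip p p - ip m m))"
  unfolding fd_norm_def fd_inner_def by (simp add: comp_plus_minus_eq[OF assms])

lemma fd_norm_fundamental_decomposition:
  assumes "vector_space sc" and "fundamental_decomposition sc ip Lp Lm"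
    and "p \<in> Lp" "m \<in> Lm"
  shows "fd_norm ip Lp Lm (p + m) = sqrt (Re (ip p p - ip m m))"
  using fundamental_decomposition_unique[OF assms(1,2) assms(3) _ assms(4)]
  by (intro fd_norm_eq assms(3,4)) auto

lemma fd_norm_nonneg:
  assumes "vector_space sc" and "hermitian_sesq sc ip"
    and fd: "fundamental_decomposition sc ip Lp Lm"
  shows "fd_norm ip Lp Lm f \<ge> 0"
proof -
  obtain p m where pm: "p \<in> Lp" "m \<in> Lm" "f = p + m"
    using fd unfolding fundamental_decomposition_def by blast
  have ip_zero: "ip x 0 = 0" for x
    using assms(2) unfolding hermitian_sesq_def by (metis add_cancel_right_right)
  have "Re (ip p p) \<ge> 0"
    using fd pm(1) ip_zero unfolding fundamental_decomposition_def positive_subspace_def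
    by (cases "p = 0") (auto intro: less_imp_le)
  moreover have "Re (ip m m) \<le> 0"
    using fd pm(2) ip_zero unfolding fundamental_decomposition_def negative_subspace_def
    by (cases "m = 0") (auto intro: less_imp_le)
  moreover have "fd_norm ip Lp Lm f = sqrt (Re (ip p p - ip m m))"
    unfolding pm(3) by (rule fd_norm_fundamental_decomposition[OF assms(1) fd pm(1,2)])
  ultimately show ?thesis
    by simp
qed

lemma fd_norm_image:
  assumes vs: "vector_space sc" and fd: "fundamental_decomposition sc ip Lp Lm"
    and additive: "\<And>x y. V (x + y) = V x + V y" and "bij V"
    and isometric: "\<And>f g. ip (V f) (V g) = ip f g"
  shows "fd_norm ip (V ` Lp) (V ` Lm) f = fd_norm ip Lp Lm (inv V f)"
proof -
  obtain p m where pm: "p \<in> Lp" "m \<in> Lm" "inv V f = p + m"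
    using fd unfolding fundamental_decomposition_def by blast
  have f_eq: "f = V p + V m"
    using \<open>bij V\<close> by (metis pm(3) additive bij_inv_eq_iff)
  have "p' = V p \<and> m' = V m"
    if in_image: "p' \<in> V ` Lp" "m' \<in> V ` Lm" and sum_eq: "p' + m' = V p + V m" for p' m'
  proof -
    obtain q n where q: "q \<in> Lp" "p' = V q" and n: "n \<in> Lm" "m' = V n"
      using in_image by blast
    have "V (q + n) = V (p + m)"
      using sum_eq by (simp add: additive q n)
    then have "q + n = p + m"
      using bij_is_inj[OF \<open>bij V\<close>] by (simp add: inj_eq)
    then show ?thesis
      using fundamental_decomposition_unique[OF vs fd q(1) pm(1) n(1) pm(2)] q n by simp
  qed
  then have "fd_norm ip (V ` Lp) (V ` Lm) f = sqrt (Re (ip (V p) (V p) - ip (V m) (V m)))"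
    unfolding f_eq using pm(1,2) by (intro fd_norm_eq) auto
  also have "\<dots> = fd_norm ip Lp Lm (inv V f)"
    unfolding isometric pm(3)
    by (rule fd_norm_fundamental_decomposition[OF vs fd pm(1,2), symmetric])
  finally show ?thesis .
qed

lemma bounded_with_inverse_iff_equivalent_norms:
  fixes N :: "'a \<Rightarrow> real"
  assumes nonneg: "\<And>f. N f \<ge> 0" and "bij V"
  shows "((\<exists>C. \<forall>f. N (V f) \<le> C * N f) \<and> (\<exists>D. \<forall>f. N (inv V f) \<le> D * N f)) \<longleftrightarrow>
         equivalent_norms N (\<lambda>f. N (inv V f))"
proof
  assume "(\<exists>C. \<forall>f. N (V f) \<le> C * N f) \<and> (\<exists>D. \<forall>f. N (inv V f) \<le> D * N f)"
  then obtain C D where C: "\<And>f. N (V f) \<le> C * N f" and D: "\<And>f. N (inv V f) \<le> D * N f"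
    by blast
  show "equivalent_norms N (\<lambda>f. N (inv V f))"
    unfolding equivalent_norms_def
  proof (intro exI conjI allI)
    fix f
    have "N f \<le> C * N (inv V f)"
      using C[of "inv V f"] \<open>bij V\<close> by (simp add: bij_is_surj surj_f_inv_f)
    also have "\<dots> \<le> max C 1 * N (inv V f)"
      using nonneg by (simp add: mult_right_mono)
    finally show "1 / max C 1 * N f \<le> N (inv V f)"
      by (simp add: field_simps)
    show "N (inv V f) \<le> max D 1 * N f"
      using D[of f] nonneg[of f] by (meson max.cobounded1 mult_right_mono order_trans)
  qed auto
next
  assume "equivalent_norms N (\<lambda>f. N (inv V f))"
  then obtain a b where "a > 0" and ab: "\<And>f. a * N f \<le> N (inv V f) \<and> N (inv V f) \<le> b * N f"
    unfolding equivalent_norms_def by blast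
  have "N (V f) \<le> (1 / a) * N f" for f
    using ab[of "V f"] \<open>a > 0\<close> \<open>bij V\<close> by (simp add: bij_is_inj field_simps)
  then show "(\<exists>C. \<forall>f. N (V f) \<le> C * N f) \<and> (\<exists>D. \<forall>f. N (inv V f) \<le> D * N f)"
    using ab by blast
qed

theorem lemma3p5:
  fixes sc :: "complex \<Rightarrow> 'a::ab_group_add \<Rightarrow> 'a"
    and ip :: "'a \<Rightarrow> 'a \<Rightarrow> complex"
    and Lp Lm :: "'a set"
    and U :: "real \<Rightarrow> 'a \<Rightarrow> 'a"
    and t :: real
  assumes "vector_space sc"
    and "hermitian_sesq sc ip"
    and "nondegenerate ip"
    and "indefinite ip"
    and "fundamental_decomposition sc ip Lp Lm"
    and "\<And>s. Vector_Spaces.linear sc sc (U s)"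
    and "\<And>s. bij (U s)"
    and "U 0 = id"
    and "\<And>s r. U (s + r) = U s \<circ> U r"
    and "\<And>s f g. ip (U s f) (U s g) = ip f g"
    and "t \<noteq> 0"
  shows "(bounded_op ip Lp Lm (U t) \<and> bounded_op ip Lp Lm (inv (U t))) \<longleftrightarrow>
         equivalent_norms (fd_norm ip Lp Lm) (fd_norm ip (U t ` Lp) (U t ` Lm))"
proof -
  have "U t (x + y) = U t x + U t y" for x y
    using assms(6)[of t] by (simp add: Vector_Spaces.linear_iff)
  then have "fd_norm ip (U t ` Lp) (U t ` Lm) = (\<lambda>f. fd_norm ip Lp Lm (inv (U t) f))"
    using fd_norm_image[OF assms(1,5)] assms(7,10) by blast
  then show ?thesis
    unfolding bounded_op_def
    using bounded_with_inverse_iff_equivalent_norms[OF fd_norm_nonneg[OF assms(1,2,5)] assms(7)]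
    by simp
qed

end
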